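(* For any $t>0$ and $x,y\in\mathbb{R}^d$, $$\int_{B(y,|x-y|/2)}p(t,x,z)p(t,z,y)\,dz\le\frac{p(2t,x,y)}{2}.$$
   Context: Let $d\ge1$ be an integer and $\alpha\in(0,d\wedge2)$. $p(t,x,y)=p(t,x-y)$ is the heat kernel of $\Delta^{\alpha/2}=-(-\Delta)^{\alpha/2}$ on $\mathbb{R}^d$ (transition density of the rotationally symmetric $\alpha$-stable process). $B(y,r)$ is the open ball of radius $r$ centered at $y$. *)

theory Defs
  imports "HOL-Analysis.Analysis"
begin

text \<open>Heat kernel of the fractional Laplacian \<open>-(-\<Delta>)^(\<alpha>/2)\<close> on the Euclidean space
  'a (dimension d = DIM('a)), i.e. the transition density p(t,x) of the rotationally
  symmetric \<alpha>-stable process, defined by Fourier inversion: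
  p(t,x) = (2 pi)^(-d) * integral over R^d of exp(-t |xi|^alpha) cos(xi . x) d xi.\<close>
definition stable_hk :: "real \<Rightarrow> real \<Rightarrow> 'a::euclidean_space \<Rightarrow> real" where
  "stable_hk \<alpha> t x =
     (1 / (2 * pi) ^ DIM('a)) *
     (\<integral>\<xi>. exp (- t * (norm \<xi> powr \<alpha>)) * cos (\<xi> \<bullet> x) \<partial>lborel)"

definition stable_hk2 :: "real \<Rightarrow> real \<Rightarrow> 'a::euclidean_space \<Rightarrow> 'a \<Rightarrow> real" where
  "stable_hk2 \<alpha> t x y = stable_hk \<alpha> t (x - y)"

end

theory Submission
  imports Defs "HOL-Probability.Probability" "HOL-Real_Asymp.Real_Asymp"
begin

text \<open>
  Write \<open>p\<^sub>t\<close> for the heat kernel, \<open>v = x - y\<close> and \<open>g(u) = p\<^sub>t(v - u) p\<^sub>t(u)\<close>. The point reflection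
  \<open>u \<mapsto> v - u\<close> preserves \<open>g\<close> and exchanges the disjoint balls \<open>B(0, |v|/2)\<close> and \<open>B(v, |v|/2)\<close>,
  so twice the integral of \<open>g\<close> over one of them is the integral over their union. Since
  \<open>g \<ge> 0\<close>, this is at most \<open>\<integral> g = p\<^sub>2\<^sub>t(v)\<close>.

  The Chapman--Kolmogorov identity is used only in the form
  \<open>\<integral> g(u) e\<^bsup>-\<delta>|u|\<^sup>2\<^esup> du \<longrightarrow> p\<^sub>2\<^sub>t(v)\<close> as \<open>\<delta> \<longrightarrow> 0\<close>: on the Fourier side the Gaussian factor
  mollifies the characteristic function \<open>e\<^bsup>-t|\<xi>|\<^sup>\<alpha>\<^esup>\<close>, and no integrability of \<open>p\<^sub>t\<close> is needed.

  Positivity of \<open>p\<^sub>t\<close> comes from Bernstein's theorem in elementary form. With \<open>\<beta> = \<alpha>/2 < 1\<close>,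
  \<open>e\<^bsup>-t l\<^sup>\<beta>\<^esup>\<close> is the limit of \<open>exp(-t h\<^sup>-\<^sup>\<beta> (1 - e\<^bsup>-hl\<^esup>)\<^sup>\<beta>)\<close> as \<open>h \<longrightarrow> 0\<close>; since
  \<open>1 - (1 - q)\<^sup>\<beta>\<close> has nonnegative Taylor coefficients, the latter is a limit of nonnegative
  combinations of exponentials \<open>e\<^bsup>-sl\<^esup>\<close>. At \<open>l = |\<xi>|\<^sup>2\<close> these are Gaussians in \<open>\<xi>\<close>, whose
  Fourier transforms are nonnegative.
\<close>

section \<open>Integration on Euclidean space\<close>

lemma lborel_integral_affine:
  fixes g :: "'a::euclidean_space \<Rightarrow> real"
  assumes c: "c \<noteq> 0" and [measurable]: "g \<in> borel_measurable borel"
  shows "(\<integral>x. g x \<partial>lborel) = \<bar>c\<bar> ^ DIM('a) * (\<integral>x. g (b + c *\<^sub>R x) \<partial>lborel)"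
proof -
  have "(\<integral>x. g x \<partial>lborel) = (\<integral>x. g x \<partial>density (distr lborel borel (\<lambda>x. b + c *\<^sub>R x)) (\<lambda>_. \<bar>c\<bar> ^ DIM('a)))"
    using lborel_affine[OF c, of b] by (simp add: ennreal_power)
  also have "\<dots> = (\<integral>x. \<bar>c\<bar> ^ DIM('a) * g (b + c *\<^sub>R x) \<partial>lborel)"
    by (subst integral_density) (auto simp: integral_distr)
  finally show ?thesis
    by simp
qed

lemma set_integral_ball_reflect:
  fixes h :: "'a::euclidean_space \<Rightarrow> real"
  assumes [measurable]: "h \<in> borel_measurable borel"
  shows "(LINT u:ball v r|lborel. h u) = (LINT u:ball 0 r|lborel. h (v - u))"
proof -
  have [measurable]: "ball v r \<in> sets borel"
    by simp
  have "(LINT u:ball v r|lborel. h u)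
      = \<bar>- 1\<bar> ^ DIM('a) * (\<integral>u. indicator (ball v r) (v + (- 1) *\<^sub>R u) *\<^sub>R h (v + (- 1) *\<^sub>R u) \<partial>lborel)"
    unfolding set_lebesgue_integral_def by (rule lborel_integral_affine) simp_all
  then show ?thesis
    by (simp add: set_lebesgue_integral_def indicator_def dist_norm)
qed

lemma set_integral_ball_translate:
  fixes h :: "'a::euclidean_space \<Rightarrow> real"
  assumes [measurable]: "h \<in> borel_measurable borel"
  shows "(LINT z:ball y r|lborel. h z) = (LINT u:ball 0 r|lborel. h (y + u))"
proof -
  have [measurable]: "ball y r \<in> sets borel"
    by simp
  have "(LINT z:ball y r|lborel. h z)
      = \<bar>1\<bar> ^ DIM('a) * (\<integral>u. indicator (ball y r) (y + 1 *\<^sub>R u) *\<^sub>R h (y + 1 *\<^sub>R u) \<partial>lborel)"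
    unfolding set_lebesgue_integral_def by (rule lborel_integral_affine) simp_all
  then show ?thesis
    by (simp add: set_lebesgue_integral_def indicator_def dist_norm)
qed

lemma set_integrable_bounded:
  fixes g :: "'a::euclidean_space \<Rightarrow> real"
  assumes [measurable]: "g \<in> borel_measurable borel" "A \<in> sets borel"
    and bound: "\<And>u. \<bar>g u\<bar> \<le> B" and finite: "emeasure lborel A < \<infinity>"
  shows "set_integrable lborel A g"
  unfolding set_integrable_def
proof (rule Bochner_Integration.integrable_bound)
  show "integrable lborel (\<lambda>u. B * indicator A u :: real)"
    using finite by (intro integrable_mult_right integrable_real_indicator) auto
  show "AE u in lborel. norm (indicator A u *\<^sub>R g u) \<le> norm (B * indicator A u :: real)"
    using bound by (intro AE_I2) (auto simp: indicator_def intro: order.trans[OF _ abs_ge_self])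
qed measurable

lemma (in pair_sigma_finite) integrable_product_mult:
  fixes f :: "'a \<Rightarrow> real" and g :: "'b \<Rightarrow> real"
  assumes f: "integrable M1 f" and g: "integrable M2 g"
  shows "integrable (M1 \<Otimes>\<^sub>M M2) (\<lambda>(x, y). f x * g y)"
proof (rule Fubini_integrable)
  have [measurable]: "f \<in> borel_measurable M1" "g \<in> borel_measurable M2"
    using f g by auto
  show "(\<lambda>(x, y). f x * g y) \<in> borel_measurable (M1 \<Otimes>\<^sub>M M2)"
    by measurable
  show "integrable M1 (\<lambda>x. \<integral>y. norm (case (x, y) of (x, y) \<Rightarrow> f x * g y) \<partial>M2)"
    using f by (simp add: abs_mult integral_mult_right_zero)
  show "AE x in M1. integrable M2 (\<lambda>y. case (x, y) of (x, y) \<Rightarrow> f x * g y)"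
    using g by simp
qed

lemma (in pair_sigma_finite) integral_product_mult:
  fixes f :: "'a \<Rightarrow> real" and g :: "'b \<Rightarrow> real"
  assumes f: "integrable M1 f" and g: "integrable M2 g"
  shows "(\<integral>p. (case p of (x, y) \<Rightarrow> f x * g y) \<partial>(M1 \<Otimes>\<^sub>M M2)) = integral\<^sup>L M1 f * integral\<^sup>L M2 g"
  using integral_fst[OF integrable_product_mult[OF f g]] by simp

interpretation lborel_product: product_sigma_finite "\<lambda>_. lborel"
  by standard

lemma
  fixes f :: "'a::euclidean_space \<Rightarrow> real \<Rightarrow> 'b::{real_normed_field,banach,second_countable_topology}"
  assumes f: "\<And>b. b \<in> Basis \<Longrightarrow> integrable lborel (f b)"
  shows integrable_prod_Basis: "integrable lborel (\<lambda>x::'a. \<Prod>b\<in>Basis. f b (x \<bullet> b))"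
    and integral_prod_Basis:
      "(\<integral>x. (\<Prod>b\<in>Basis. f b (x \<bullet> b)) \<partial>(lborel::'a measure)) = (\<Prod>b\<in>Basis. integral\<^sup>L lborel (f b))"
proof -
  let ?T = "\<lambda>y::'a \<Rightarrow> real. \<Sum>b\<in>Basis. y b *\<^sub>R b"
  have [measurable]: "f b \<in> borel_measurable borel" if "b \<in> Basis" for b
    using f[OF that] by auto
  have T[measurable]: "?T \<in> measurable (\<Pi>\<^sub>M b\<in>Basis. lborel) borel"
    by measurable
  have prod_measurable: "(\<lambda>x::'a. \<Prod>b\<in>Basis. f b (x \<bullet> b)) \<in> borel_measurable borel"
    by measurable
  have coords: "(\<Prod>b\<in>Basis. f b (?T y \<bullet> b)) = (\<Prod>b\<in>Basis. f b (y b))" for y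
    by (intro prod.cong refl) (simp add: inner_sum_left inner_Basis if_distrib sum.If_cases)
  show "integrable lborel (\<lambda>x::'a. \<Prod>b\<in>Basis. f b (x \<bullet> b))"
    by (subst lborel_eq, subst integrable_distr_eq[OF T prod_measurable], unfold coords)
       (rule lborel_product.product_integrable_prod, use f in auto)
  show "(\<integral>x. (\<Prod>b\<in>Basis. f b (x \<bullet> b)) \<partial>(lborel::'a measure)) = (\<Prod>b\<in>Basis. integral\<^sup>L lborel (f b))"
    by (subst lborel_eq, subst integral_distr[OF T prod_measurable], unfold coords)
       (rule lborel_product.product_integral_prod, use f in auto)
qed

lemma integral_gaussian_damped_tendsto:
  fixes h :: "'a::euclidean_space \<Rightarrow> real"
  assumes h: "integrable lborel h"
  shows "(\<lambda>n. \<integral>u. h u * exp (- (1 / Suc n) * (norm u)\<^sup>2) \<partial>lborel) \<longlonglongrightarrow> (\<integral>u. h u \<partial>lborel)"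
proof (rule integral_dominated_convergence[where w="\<lambda>u. \<bar>h u\<bar>"])
  have [measurable]: "h \<in> borel_measurable borel"
    using borel_measurable_integrable[OF h] by simp
  show "(\<lambda>u. h u * exp (- (1 / Suc n) * (norm u)\<^sup>2)) \<in> borel_measurable lborel" for n
    by measurable
  show "h \<in> borel_measurable lborel"
    by measurable
  show "integrable lborel (\<lambda>u. \<bar>h u\<bar>)"
    using h by (rule integrable_abs)
  show "AE u in lborel. (\<lambda>n. h u * exp (- (1 / Suc n) * (norm u)\<^sup>2)) \<longlonglongrightarrow> h u"
  proof (rule AE_I2)
    fix u :: 'a
    have "(\<lambda>n. exp (- (1 / Suc n) * (norm u)\<^sup>2)) \<longlonglongrightarrow> exp (- 0 * (norm u)\<^sup>2)"
      by (intro tendsto_intros LIMSEQ_Suc[OF lim_const_over_n])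
    from tendsto_mult[OF tendsto_const this, of "h u"]
    show "(\<lambda>n. h u * exp (- (1 / Suc n) * (norm u)\<^sup>2)) \<longlonglongrightarrow> h u"
      by simp
  qed
  show "AE u in lborel. norm (h u * exp (- (1 / Suc n) * (norm u)\<^sup>2)) \<le> \<bar>h u\<bar>" for n
    by (intro AE_I2) (simp add: abs_mult mult_left_le)
qed

section \<open>Gaussian integrals\<close>

lemma has_bochner_integral_std_normal_iexp:
  "has_bochner_integral lborel (\<lambda>x. complex_of_real (std_normal_density x) * iexp (t * x))
     (complex_of_real (exp (- t\<^sup>2 / 2)))"
proof -
  have "integrable lborel (\<lambda>x. complex_of_real (std_normal_density x) * iexp (t * x))"
    by (rule Bochner_Integration.integrable_bound[OF integrable_normal_density[where \<mu>=0 and \<sigma>=1]])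
       (auto simp: norm_mult)
  moreover have "char std_normal_distribution t
      = (CLINT x|lborel. complex_of_real (std_normal_density x) * iexp (t * x))"
    unfolding char_def by (subst integral_density) (auto simp: scaleR_conv_of_real)
  ultimately show ?thesis
    by (simp add: has_bochner_integral_iff char_std_normal_distribution)
qed

lemma has_bochner_integral_gaussian_iexp_real:
  fixes a z :: real
  assumes "0 < a"
  shows "has_bochner_integral lborel (\<lambda>s. complex_of_real (exp (- a * s\<^sup>2)) * iexp (z * s))
           (complex_of_real (sqrt (pi / a) * exp (- z\<^sup>2 / (4 * a))))"
proof -
  define c where "c = sqrt (2 * a)"
  have c: "0 < c" "c\<^sup>2 = 2 * a"
    using assms by (auto simp: c_def)
  define h where "h = (\<lambda>x. complex_of_real (std_normal_density x) * iexp (z / c * x))"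
  have std: "has_bochner_integral lborel (\<lambda>s. h (0 + c * s)) (complex_of_real (exp (- (z / c)\<^sup>2 / 2)) /\<^sub>R \<bar>c\<bar>)"
    using has_bochner_integral_std_normal_iexp[of "z / c"] c
    by (subst lborel_has_bochner_integral_real_affine_iff[symmetric]) (auto simp: h_def)
  have "complex_of_real (sqrt (2 * pi)) * (complex_of_real (exp (- (z / c)\<^sup>2 / 2)) /\<^sub>R \<bar>c\<bar>)
      = complex_of_real (sqrt (2 * pi) / c * exp (- (z / c)\<^sup>2 / 2))"
    using c by (simp add: scaleR_conv_of_real field_simps)
  with has_bochner_integral_mult_right[OF std]
  have "has_bochner_integral lborel (\<lambda>s. complex_of_real (sqrt (2 * pi)) * h (0 + c * s))
      (complex_of_real (sqrt (2 * pi) / c * exp (- (z / c)\<^sup>2 / 2)))"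
    by metis
  moreover have "complex_of_real (sqrt (2 * pi)) * h (0 + c * s)
      = complex_of_real (exp (- a * s\<^sup>2)) * iexp (z * s)" for s
    using c by (simp add: h_def std_normal_density_def power_mult_distrib)
  moreover have "sqrt (2 * pi) / c = sqrt (pi / a)"
    using assms by (simp add: c_def flip: real_sqrt_divide)
  moreover have "- (z / c)\<^sup>2 / 2 = - z\<^sup>2 / (4 * a)"
    using c by (simp add: power_divide)
  ultimately show ?thesis
    by (simp only:)
qed

definition gaussian_ft :: "real \<Rightarrow> nat \<Rightarrow> real \<Rightarrow> real" where
  "gaussian_ft a d r = sqrt (pi / a) ^ d * exp (- r\<^sup>2 / (4 * a))"

lemma gaussian_ft_nonneg: "0 < a \<Longrightarrow> 0 \<le> gaussian_ft a d r"
  by (simp add: gaussian_ft_def)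

lemma gaussian_ft_le: "0 < a \<Longrightarrow> gaussian_ft a d r \<le> sqrt (pi / a) ^ d"
  by (simp add: gaussian_ft_def)

lemma gaussian_ft_measurable [measurable]: "gaussian_ft a d \<in> borel_measurable borel"
  unfolding gaussian_ft_def by measurable

lemma has_bochner_integral_gaussian_iexp:
  fixes \<zeta> :: "'a::euclidean_space"
  assumes "0 < a"
  shows "has_bochner_integral lborel (\<lambda>u::'a. complex_of_real (exp (- a * (norm u)\<^sup>2)) * iexp (\<zeta> \<bullet> u))
           (complex_of_real (gaussian_ft a DIM('a) (norm \<zeta>)))"
proof -
  define f where "f b s = complex_of_real (exp (- a * s\<^sup>2)) * iexp ((\<zeta> \<bullet> b) * s)" for b s
  have f: "has_bochner_integral lborel (f b)
      (complex_of_real (sqrt (pi / a) * exp (- (\<zeta> \<bullet> b)\<^sup>2 / (4 * a))))" for b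
    unfolding f_def by (rule has_bochner_integral_gaussian_iexp_real[OF assms])
  have norm_sq: "(norm x)\<^sup>2 = (\<Sum>b\<in>Basis. (x \<bullet> b)\<^sup>2)" for x :: 'a
    unfolding power2_norm_eq_inner by (subst euclidean_inner) (simp add: power2_eq_square)
  have "complex_of_real (exp (- a * (norm u)\<^sup>2)) * iexp (\<zeta> \<bullet> u) = (\<Prod>b\<in>Basis. f b (u \<bullet> b))" for u :: 'a
    by (simp add: f_def norm_sq euclidean_inner[of \<zeta> u] prod.distrib sum_distrib_left
        exp_sum of_real_prod mult_ac flip: sum_negf)
  moreover have "(\<Prod>b\<in>(Basis::'a set). complex_of_real (sqrt (pi / a) * exp (- (\<zeta> \<bullet> b)\<^sup>2 / (4 * a))))
      = complex_of_real (gaussian_ft a DIM('a) (norm \<zeta>))"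
    by (simp add: gaussian_ft_def norm_sq prod.distrib exp_sum of_real_prod
        sum_divide_distrib flip: sum_negf)
  ultimately show ?thesis
    using integrable_prod_Basis[of f] integral_prod_Basis[of f] f
    by (simp add: has_bochner_integral_iff)
qed

lemma has_bochner_integral_gaussian_cos:
  fixes \<zeta> :: "'a::euclidean_space"
  assumes "0 < a"
  shows "has_bochner_integral lborel (\<lambda>u::'a. exp (- a * (norm u)\<^sup>2) * cos (c + \<zeta> \<bullet> u))
           (cos c * gaussian_ft a DIM('a) (norm \<zeta>))"
proof -
  have "has_bochner_integral lborel
      (\<lambda>u::'a. iexp c * (complex_of_real (exp (- a * (norm u)\<^sup>2)) * iexp (\<zeta> \<bullet> u)))
      (iexp c * complex_of_real (gaussian_ft a DIM('a) (norm \<zeta>)))"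
    by (intro has_bochner_integral_mult_right has_bochner_integral_gaussian_iexp assms)
  from has_bochner_integral_Re[OF this] show ?thesis
    by (simp add: Re_exp Im_exp cos_add algebra_simps)
qed

lemma has_bochner_integral_gaussian:
  "0 < a \<Longrightarrow> has_bochner_integral lborel (\<lambda>u::'a::euclidean_space. exp (- a * (norm u)\<^sup>2))
     (sqrt (pi / a) ^ DIM('a))"
  using has_bochner_integral_gaussian_cos[of a 0 0] by (simp add: gaussian_ft_def)

lemma integrable_gaussian:
  assumes "0 < a"
  shows "integrable lborel (\<lambda>u::'a::euclidean_space. exp (- a * (norm u)\<^sup>2))"
  using has_bochner_integral_gaussian[OF assms] by (rule integrable.intros)

lemma has_bochner_integral_cos_cos_gaussian:
  fixes \<xi> \<eta> v :: "'a::euclidean_space"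
  assumes "0 < \<delta>"
  shows "has_bochner_integral lborel (\<lambda>u. cos (\<xi> \<bullet> (v - u)) * cos (\<eta> \<bullet> u) * exp (- \<delta> * (norm u)\<^sup>2))
           (cos (\<xi> \<bullet> v) * (gaussian_ft \<delta> DIM('a) (norm (\<eta> - \<xi>))
              + gaussian_ft \<delta> DIM('a) (norm (\<eta> + \<xi>))) / 2)"
proof -
  have cos_diff_swap: "cos (x - y) = cos (y - x)" for x y :: real
    by (metis cos_minus minus_diff_eq)
  have "(\<lambda>u. cos (\<xi> \<bullet> (v - u)) * cos (\<eta> \<bullet> u) * exp (- \<delta> * (norm u)\<^sup>2))
      = (\<lambda>u. (exp (- \<delta> * (norm u)\<^sup>2) * cos (\<xi> \<bullet> v + (\<eta> - \<xi>) \<bullet> u)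
         + exp (- \<delta> * (norm u)\<^sup>2) * cos (\<xi> \<bullet> v + (- (\<eta> + \<xi>)) \<bullet> u)) / 2)"
    by (rule ext, simp add: cos_times_cos inner_diff_left inner_diff_right inner_add_left algebra_simps)
      (rule cos_diff_swap)
  moreover have "cos (\<xi> \<bullet> v) * (gaussian_ft \<delta> DIM('a) (norm (\<eta> - \<xi>))
      + gaussian_ft \<delta> DIM('a) (norm (\<eta> + \<xi>))) / 2
    = (cos (\<xi> \<bullet> v) * gaussian_ft \<delta> DIM('a) (norm (\<eta> - \<xi>))
      + cos (\<xi> \<bullet> v) * gaussian_ft \<delta> DIM('a) (norm (- (\<eta> + \<xi>)))) / 2"
    unfolding norm_minus_cancel by (simp add: algebra_simps)
  moreover have "has_bochner_integral lborel
      (\<lambda>u. (exp (- \<delta> * (norm u)\<^sup>2) * cos (\<xi> \<bullet> v + (\<eta> - \<xi>) \<bullet> u)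
         + exp (- \<delta> * (norm u)\<^sup>2) * cos (\<xi> \<bullet> v + (- (\<eta> + \<xi>)) \<bullet> u)) / 2)
      ((cos (\<xi> \<bullet> v) * gaussian_ft \<delta> DIM('a) (norm (\<eta> - \<xi>))
        + cos (\<xi> \<bullet> v) * gaussian_ft \<delta> DIM('a) (norm (- (\<eta> + \<xi>)))) / 2)"
    by (intro has_bochner_integral_divide_zero has_bochner_integral_add
        has_bochner_integral_gaussian_cos assms)
  ultimately show ?thesis
    by (simp only:)
qed

section \<open>The characteristic function of the stable process\<close>

lemma exp_neg_powr_le_inverse_square_large:
  fixes c \<alpha> s :: real and k :: nat
  assumes c: "0 < c" and k: "0 < k" "2 \<le> real k * \<alpha>" and s: "1 < \<bar>s\<bar>"
  shows "exp (- c * \<bar>s\<bar> powr \<alpha>) \<le> 2 * (k / c) ^ k * inverse (1 + s\<^sup>2)"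
proof -
  define y where "y = c * \<bar>s\<bar> powr \<alpha>"
  have y: "0 \<le> y"
    using c by (simp add: y_def)
  have "s\<^sup>2 = \<bar>s\<bar> powr 2"
    by (simp add: powr_numeral)
  also have "\<dots> \<le> \<bar>s\<bar> powr (real k * \<alpha>)"
    using s k by (intro powr_mono) auto
  also have "\<dots> = (\<bar>s\<bar> powr \<alpha>) ^ k"
    using s by (simp add: powr_powr powr_realpow[symmetric] mult.commute)
  finally have "(c / k) ^ k * s\<^sup>2 \<le> (c / k) ^ k * (\<bar>s\<bar> powr \<alpha>) ^ k"
    using c by (intro mult_left_mono) auto
  also have "\<dots> = (y / k) ^ k"
    by (simp add: y_def power_divide power_mult_distrib)
  also have "\<dots> \<le> (1 + y / k) ^ k"
    using y by (intro power_mono) auto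
  also have "\<dots> \<le> exp y"
    using y k by (intro exp_ge_one_plus_x_over_n_power_n) auto
  finally have "(c / k) ^ k * s\<^sup>2 \<le> exp y" .
  moreover have "0 < (c / k) ^ k * s\<^sup>2"
    using c k s by auto
  ultimately have "inverse (exp y) \<le> inverse ((c / k) ^ k * s\<^sup>2)"
    by (rule le_imp_inverse_le)
  also have "inverse ((c / k) ^ k * s\<^sup>2) = (k / c) ^ k * inverse (s\<^sup>2)"
    by (simp add: inverse_mult_distrib flip: power_inverse)
  finally have "exp (- y) \<le> (k / c) ^ k * inverse (s\<^sup>2)"
    by (simp add: exp_minus)
  also have "\<dots> \<le> (k / c) ^ k * (2 * inverse (1 + s\<^sup>2))"
  proof (intro mult_left_mono)
    have "1 < s\<^sup>2"
      using s abs_square_le_1[of s] by linarith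
    then have "inverse (2 * s\<^sup>2) \<le> inverse (1 + s\<^sup>2)"
      by (intro le_imp_inverse_le) auto
    then show "inverse (s\<^sup>2) \<le> 2 * inverse (1 + s\<^sup>2)"
      by (simp add: inverse_mult_distrib)
  qed (use c in simp)
  finally show ?thesis
    by (simp add: y_def)
qed

lemma exp_neg_powr_le_inverse_square:
  fixes c \<alpha> :: real
  assumes c: "0 < c" and \<alpha>: "0 < \<alpha>"
  obtains M where "\<And>s. exp (- c * \<bar>s\<bar> powr \<alpha>) \<le> M * inverse (1 + s\<^sup>2)"
proof -
  obtain n :: nat where "2 / \<alpha> \<le> real n"
    using real_arch_simple by blast
  define k where "k = Suc n"
  have k: "0 < k" "2 \<le> real k * \<alpha>"
    using \<open>2 / \<alpha> \<le> real n\<close> \<alpha> by (auto simp: k_def field_simps)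
  define M where "M = 2 * max 1 ((k / c) ^ k)"
  have "exp (- c * \<bar>s\<bar> powr \<alpha>) \<le> M * inverse (1 + s\<^sup>2)" for s
  proof (cases "\<bar>s\<bar> \<le> 1")
    case True
    have "1 + s\<^sup>2 \<le> M"
      using True abs_square_le_1[of s] by (simp add: M_def)
    then have "1 \<le> M * inverse (1 + s\<^sup>2)"
      by (simp add: field_simps add_pos_nonneg)
    moreover have "exp (- c * \<bar>s\<bar> powr \<alpha>) \<le> 1"
      using c by simp
    ultimately show ?thesis
      by linarith
  next
    case False
    then have "exp (- c * \<bar>s\<bar> powr \<alpha>) \<le> 2 * (k / c) ^ k * inverse (1 + s\<^sup>2)"
      using c k by (intro exp_neg_powr_le_inverse_square_large) auto
    also have "\<dots> \<le> M * inverse (1 + s\<^sup>2)"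
      unfolding M_def by (intro mult_right_mono mult_left_mono) (auto simp: add_pos_nonneg)
    finally show ?thesis .
  qed
  then show ?thesis
    by (rule that)
qed

definition stable_char :: "real \<Rightarrow> real \<Rightarrow> 'a::euclidean_space \<Rightarrow> real" where
  "stable_char \<alpha> t \<xi> = exp (- t * norm \<xi> powr \<alpha>)"

lemma stable_char_pos: "0 < stable_char \<alpha> t \<xi>"
  by (simp add: stable_char_def)

lemma stable_char_le_1: "0 \<le> t \<Longrightarrow> stable_char \<alpha> t \<xi> \<le> 1"
  by (simp add: stable_char_def)

lemma stable_char_minus: "stable_char \<alpha> t (- \<xi>) = stable_char \<alpha> t \<xi>"
  by (simp add: stable_char_def)

lemma stable_char_mult_self: "stable_char \<alpha> t \<xi> * stable_char \<alpha> t \<xi> = stable_char \<alpha> (2 * t) \<xi>"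
  by (simp add: stable_char_def flip: exp_add)

lemma stable_char_measurable [measurable]: "stable_char \<alpha> t \<in> borel_measurable borel"
  unfolding stable_char_def by measurable

lemma continuous_on_stable_char: "0 < \<alpha> \<Longrightarrow> continuous_on UNIV (stable_char \<alpha> t)"
  unfolding stable_char_def by (intro continuous_intros continuous_on_powr') auto

lemma integrable_stable_char:
  assumes t: "0 < t" and \<alpha>: "0 < \<alpha>"
  shows "integrable lborel (stable_char \<alpha> t :: 'a::euclidean_space \<Rightarrow> real)"
proof -
  define c where "c = t / DIM('a)"
  have c: "0 < c"
    using t by (simp add: c_def)
  obtain M where M: "\<And>s. exp (- c * \<bar>s\<bar> powr \<alpha>) \<le> M * inverse (1 + s\<^sup>2)"
    using exp_neg_powr_le_inverse_square[OF c \<alpha>] by blast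
  have bound: "stable_char \<alpha> t \<xi> \<le> (\<Prod>b\<in>Basis. M * inverse (1 + (\<xi> \<bullet> b)\<^sup>2))" for \<xi> :: 'a
  proof -
    have "stable_char \<alpha> t \<xi> = (\<Prod>b\<in>(Basis::'a set). exp (- c * norm \<xi> powr \<alpha>))"
      by (simp add: stable_char_def c_def exp_of_nat_mult[symmetric])
    also have "\<dots> \<le> (\<Prod>b\<in>(Basis::'a set). exp (- c * \<bar>\<xi> \<bullet> b\<bar> powr \<alpha>))"
      using c \<alpha> by (intro prod_mono) (auto intro!: powr_mono2 Basis_le_norm)
    also have "\<dots> \<le> (\<Prod>b\<in>Basis. M * inverse (1 + (\<xi> \<bullet> b)\<^sup>2))"
      by (intro prod_mono conjI exp_ge_zero M)
    finally show ?thesis .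
  qed
  have "integrable lborel (\<lambda>\<xi>::'a. \<Prod>b\<in>Basis. M * inverse (1 + (\<xi> \<bullet> b)\<^sup>2))"
    using integrable_inverse_1_plus_square
    by (intro integrable_prod_Basis integrable_mult_right) (simp add: set_integrable_def)
  then show ?thesis
    by (rule Bochner_Integration.integrable_bound)
       (use bound in \<open>auto intro!: AE_I2 order.trans[OF _ abs_ge_self]
          simp: less_imp_le[OF stable_char_pos]\<close>)
qed

definition cos_transform :: "('a::euclidean_space \<Rightarrow> real) \<Rightarrow> 'a \<Rightarrow> real" where
  "cos_transform f w = (\<integral>\<xi>. f \<xi> * cos (\<xi> \<bullet> w) \<partial>lborel)"

lemma integrable_mult_cos:
  "integrable lborel f \<Longrightarrow> integrable lborel (\<lambda>\<xi>::'a::euclidean_space. f \<xi> * cos (\<xi> \<bullet> w))"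
  by (rule Bochner_Integration.integrable_bound[of _ f])
     (auto intro!: AE_I2 simp: abs_mult mult_left_le dest: borel_measurable_integrable)

lemma cos_transform_mult_left: "cos_transform (\<lambda>\<xi>. c * f \<xi>) w = c * cos_transform f w"
  by (simp add: cos_transform_def mult.assoc)

lemma cos_transform_add:
  "integrable lborel f \<Longrightarrow> integrable lborel g \<Longrightarrow>
     cos_transform (\<lambda>\<xi>. f \<xi> + g \<xi>) w = cos_transform f w + cos_transform g w"
  by (simp add: cos_transform_def distrib_right integrable_mult_cos)

lemma abs_cos_transform_le:
  assumes "integrable lborel f"
  shows "\<bar>cos_transform f w\<bar> \<le> (\<integral>\<xi>. \<bar>f \<xi>\<bar> \<partial>lborel)"
proof -
  have "\<bar>cos_transform f w\<bar> \<le> (\<integral>\<xi>. \<bar>f \<xi> * cos (\<xi> \<bullet> w)\<bar> \<partial>lborel)"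
    unfolding cos_transform_def by (rule integral_abs_bound)
  also have "\<dots> \<le> (\<integral>\<xi>. \<bar>f \<xi>\<bar> \<partial>lborel)"
    using assms by (intro integral_mono integrable_abs integrable_mult_cos)
      (auto simp: abs_mult mult_left_le)
  finally show ?thesis .
qed

lemma cos_transform_measurable [measurable]:
  assumes [measurable]: "f \<in> borel_measurable borel"
  shows "cos_transform f \<in> borel_measurable borel"
  unfolding cos_transform_def by measurable

lemma cos_transform_gaussian:
  "0 < a \<Longrightarrow> cos_transform (\<lambda>\<xi>::'a::euclidean_space. exp (- a * (norm \<xi>)\<^sup>2)) w
     = gaussian_ft a DIM('a) (norm w)"
  using has_bochner_integral_gaussian_cos[of a 0 w]
  by (simp add: cos_transform_def has_bochner_integral_iff inner_commute)

lemma stable_hk_eq_cos_transform: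
  "stable_hk \<alpha> t w = cos_transform (stable_char \<alpha> t) w / (2 * pi) ^ DIM('a)"
  for w :: "'a::euclidean_space"
  by (simp add: stable_hk_def cos_transform_def stable_char_def)

lemma stable_hk_measurable [measurable]: "stable_hk \<alpha> t \<in> borel_measurable borel"
  unfolding stable_hk_eq_cos_transform[abs_def] by measurable

lemma stable_hk_le:
  fixes w :: "'a::euclidean_space"
  assumes "0 < t" "0 < \<alpha>"
  shows "stable_hk \<alpha> t w \<le> (\<integral>\<xi>. stable_char \<alpha> t (\<xi>::'a) \<partial>lborel) / (2 * pi) ^ DIM('a)"
proof -
  have "cos_transform (stable_char \<alpha> t) w \<le> (\<integral>\<xi>. stable_char \<alpha> t (\<xi>::'a) \<partial>lborel)"
    using abs_cos_transform_le[OF integrable_stable_char[OF assms], of w]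
    by (simp add: less_imp_le[OF stable_char_pos])
  then show ?thesis
    unfolding stable_hk_eq_cos_transform by (rule divide_right_mono) simp
qed

section \<open>Positivity of the heat kernel\<close>

inductive nonneg_exp_comb :: "(real \<Rightarrow> real) \<Rightarrow> bool" where
  zero: "nonneg_exp_comb (\<lambda>_. 0)"
| add_exp: "0 \<le> c \<Longrightarrow> 0 \<le> s \<Longrightarrow> nonneg_exp_comb f \<Longrightarrow> nonneg_exp_comb (\<lambda>l. c * exp (- s * l) + f l)"

lemma nonneg_exp_comb_exp: "0 \<le> s \<Longrightarrow> nonneg_exp_comb (\<lambda>l. exp (- s * l))"
  using nonneg_exp_comb.add_exp[OF _ _ nonneg_exp_comb.zero, of 1 s] by simp

lemma nonneg_exp_comb_const: "0 \<le> c \<Longrightarrow> nonneg_exp_comb (\<lambda>_. c)"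
  using nonneg_exp_comb.add_exp[OF _ _ nonneg_exp_comb.zero, of c 0] by simp

lemma nonneg_exp_comb_add:
  "nonneg_exp_comb f \<Longrightarrow> nonneg_exp_comb g \<Longrightarrow> nonneg_exp_comb (\<lambda>l. f l + g l)"
proof (induction rule: nonneg_exp_comb.induct)
  case zero
  then show ?case by simp
next
  case (add_exp c s f)
  then show ?case
    using nonneg_exp_comb.add_exp[of c s "\<lambda>l. f l + g l"] by (simp add: add.assoc)
qed

lemma nonneg_exp_comb_mult_exp:
  assumes "0 \<le> c" "0 \<le> s"
  shows "nonneg_exp_comb g \<Longrightarrow> nonneg_exp_comb (\<lambda>l. c * exp (- s * l) * g l)"
proof (induction rule: nonneg_exp_comb.induct)
  case zero
  then show ?case by (simp add: nonneg_exp_comb.zero)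
next
  case (add_exp c' s' g)
  have "nonneg_exp_comb (\<lambda>l. (c * c') * exp (- (s + s') * l) + c * exp (- s * l) * g l)"
    using assms add_exp by (intro nonneg_exp_comb.add_exp) auto
  then show ?case
    by (simp add: algebra_simps exp_add[symmetric])
qed

lemma nonneg_exp_comb_mult:
  "nonneg_exp_comb f \<Longrightarrow> nonneg_exp_comb g \<Longrightarrow> nonneg_exp_comb (\<lambda>l. f l * g l)"
proof (induction rule: nonneg_exp_comb.induct)
  case zero
  then show ?case by (simp add: nonneg_exp_comb.zero)
next
  case (add_exp c s f)
  then show ?case
    using nonneg_exp_comb_add[OF nonneg_exp_comb_mult_exp[of c s g]] by (simp add: distrib_right)
qed

lemma nonneg_exp_comb_cmult: "0 \<le> c \<Longrightarrow> nonneg_exp_comb f \<Longrightarrow> nonneg_exp_comb (\<lambda>l. c * f l)"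
  using nonneg_exp_comb_mult[OF nonneg_exp_comb_const] by blast

lemma nonneg_exp_comb_power: "nonneg_exp_comb f \<Longrightarrow> nonneg_exp_comb (\<lambda>l. f l ^ n)"
  by (induction n) (simp_all add: nonneg_exp_comb_const nonneg_exp_comb_mult)

lemma nonneg_exp_comb_sum:
  "(\<And>i. i \<in> I \<Longrightarrow> nonneg_exp_comb (f i)) \<Longrightarrow> nonneg_exp_comb (\<lambda>l. \<Sum>i\<in>I. f i l)"
  by (induction I rule: infinite_finite_induct)
     (simp_all add: nonneg_exp_comb.zero nonneg_exp_comb_add)

lemma nonneg_exp_comb_nonneg: "nonneg_exp_comb f \<Longrightarrow> 0 \<le> f l"
  by (induction rule: nonneg_exp_comb.induct) auto

lemma nonneg_exp_comb_antimono: "nonneg_exp_comb f \<Longrightarrow> l \<le> l' \<Longrightarrow> f l' \<le> f l"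
  by (induction rule: nonneg_exp_comb.induct) (auto intro!: add_mono mult_left_mono)

lemma nonneg_exp_comb_measurable: "nonneg_exp_comb f \<Longrightarrow> f \<in> borel_measurable borel"
  by (induction rule: nonneg_exp_comb.induct) auto

lemma integrable_radial_gaussian_damped:
  assumes [measurable]: "g \<in> borel_measurable borel"
    and bound: "\<And>l. 0 \<le> l \<Longrightarrow> \<bar>g l\<bar> \<le> B" and "0 < \<epsilon>"
  shows "integrable lborel (\<lambda>\<xi>::'a::euclidean_space. g ((norm \<xi>)\<^sup>2) * exp (- \<epsilon> * (norm \<xi>)\<^sup>2))"
proof (rule Bochner_Integration.integrable_bound)
  show "integrable lborel (\<lambda>\<xi>::'a. B * exp (- \<epsilon> * (norm \<xi>)\<^sup>2))"
    using integrable_gaussian[OF \<open>0 < \<epsilon>\<close>] by (rule integrable_mult_right)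
  show "AE \<xi> in lborel. norm (g ((norm \<xi>)\<^sup>2) * exp (- \<epsilon> * (norm \<xi>)\<^sup>2))
      \<le> norm (B * exp (- \<epsilon> * (norm (\<xi>::'a))\<^sup>2))"
    using bound by (auto intro!: AE_I2 mult_right_mono simp: abs_mult order.trans[OF _ abs_ge_self])
qed measurable

lemma cos_transform_gaussian_damped_exp_comb_nonneg:
  assumes "nonneg_exp_comb g" and \<epsilon>: "0 < \<epsilon>"
  shows "0 \<le> cos_transform (\<lambda>\<xi>::'a::euclidean_space. g ((norm \<xi>)\<^sup>2) * exp (- \<epsilon> * (norm \<xi>)\<^sup>2)) w"
  using assms(1)
proof induction
  case zero
  then show ?case by (simp add: cos_transform_def)
next
  case (add_exp c s f)
  have f: "integrable lborel (\<lambda>\<xi>::'a. f ((norm \<xi>)\<^sup>2) * exp (- \<epsilon> * (norm \<xi>)\<^sup>2))"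
    using add_exp.hyps \<epsilon> nonneg_exp_comb_nonneg nonneg_exp_comb_antimono
    by (intro integrable_radial_gaussian_damped[where B="f 0"] nonneg_exp_comb_measurable) auto
  have "cos_transform (\<lambda>\<xi>::'a. (c * exp (- s * (norm \<xi>)\<^sup>2) + f ((norm \<xi>)\<^sup>2)) * exp (- \<epsilon> * (norm \<xi>)\<^sup>2)) w
      = cos_transform (\<lambda>\<xi>::'a. c * exp (- (s + \<epsilon>) * (norm \<xi>)\<^sup>2)
          + f ((norm \<xi>)\<^sup>2) * exp (- \<epsilon> * (norm \<xi>)\<^sup>2)) w"
    by (simp add: algebra_simps flip: exp_add)
  also have "\<dots> = c * cos_transform (\<lambda>\<xi>::'a. exp (- (s + \<epsilon>) * (norm \<xi>)\<^sup>2)) w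
      + cos_transform (\<lambda>\<xi>::'a. f ((norm \<xi>)\<^sup>2) * exp (- \<epsilon> * (norm \<xi>)\<^sup>2)) w"
    using add_exp.hyps \<epsilon>
    by (subst cos_transform_add[OF integrable_mult_right[OF integrable_gaussian] f])
       (simp_all add: cos_transform_mult_left)
  also have "cos_transform (\<lambda>\<xi>::'a. exp (- (s + \<epsilon>) * (norm \<xi>)\<^sup>2)) w
      = gaussian_ft (s + \<epsilon>) DIM('a) (norm w)"
    using add_exp.hyps \<epsilon> by (intro cos_transform_gaussian) simp
  finally show ?case
    using add_exp \<epsilon> by (simp add: gaussian_ft_nonneg)
qed

lemma cos_transform_gaussian_damped_nonneg_limit:
  fixes G :: "nat \<Rightarrow> real \<Rightarrow> real"
  assumes nonneg: "\<And>n. 0 \<le> cos_transform (\<lambda>\<xi>::'a::euclidean_space. G n ((norm \<xi>)\<^sup>2) * exp (- \<epsilon> * (norm \<xi>)\<^sup>2)) w"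
    and lim: "\<And>l. 0 < l \<Longrightarrow> (\<lambda>n. G n l) \<longlonglongrightarrow> g l"
    and bound: "\<And>n l. 0 < l \<Longrightarrow> \<bar>G n l\<bar> \<le> B"
    and [measurable]: "\<And>n. G n \<in> borel_measurable borel" "g \<in> borel_measurable borel"
    and \<epsilon>: "0 < \<epsilon>"
  shows "0 \<le> cos_transform (\<lambda>\<xi>::'a. g ((norm \<xi>)\<^sup>2) * exp (- \<epsilon> * (norm \<xi>)\<^sup>2)) w"
proof -
  have B: "0 \<le> B"
    using bound[of 1 0] by linarith
  have "(\<lambda>n. cos_transform (\<lambda>\<xi>::'a. G n ((norm \<xi>)\<^sup>2) * exp (- \<epsilon> * (norm \<xi>)\<^sup>2)) w)
      \<longlonglongrightarrow> cos_transform (\<lambda>\<xi>::'a. g ((norm \<xi>)\<^sup>2) * exp (- \<epsilon> * (norm \<xi>)\<^sup>2)) w"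
    unfolding cos_transform_def
  proof (rule integral_dominated_convergence[where w="\<lambda>\<xi>. B * exp (- \<epsilon> * (norm \<xi>)\<^sup>2)"])
    show "integrable lborel (\<lambda>\<xi>::'a. B * exp (- \<epsilon> * (norm \<xi>)\<^sup>2))"
      using integrable_gaussian[OF \<epsilon>] by (rule integrable_mult_right)
    show "AE \<xi> in lborel. (\<lambda>n. G n ((norm \<xi>)\<^sup>2) * exp (- \<epsilon> * (norm \<xi>)\<^sup>2) * cos (\<xi> \<bullet> w))
        \<longlonglongrightarrow> g ((norm \<xi>)\<^sup>2) * exp (- \<epsilon> * (norm \<xi>)\<^sup>2) * cos (\<xi> \<bullet> w)"
      using AE_lborel_singleton[of 0]
      by eventually_elim (intro tendsto_intros lim, simp)
    show "AE \<xi> in lborel. norm (G n ((norm \<xi>)\<^sup>2) * exp (- \<epsilon> * (norm \<xi>)\<^sup>2) * cos (\<xi> \<bullet> w))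
        \<le> B * exp (- \<epsilon> * (norm (\<xi>::'a))\<^sup>2)" for n
      using AE_lborel_singleton[of 0]
    proof eventually_elim
      case (elim \<xi>)
      then have "\<bar>G n ((norm \<xi>)\<^sup>2)\<bar> * \<bar>cos (\<xi> \<bullet> w)\<bar> \<le> B * 1"
        using B by (intro mult_mono bound) auto
      then show ?case
        by (simp add: abs_mult mult_ac mult_right_mono)
    qed
  qed measurable
  then show ?thesis
    by (rule LIMSEQ_le_const) (use nonneg in blast)
qed

lemma sum_power_div_fact_le_exp:
  fixes x :: real
  assumes "0 \<le> x"
  shows "(\<Sum>j<n. x ^ j / fact j) \<le> exp x"
proof -
  have "(\<lambda>j. x ^ j / fact j) sums exp x"
    using exp_converges[of x] by (simp add: scaleR_conv_of_real divide_inverse mult.commute)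
  then show ?thesis
    using assms sum_le_suminf[of "\<lambda>j. x ^ j / fact j" "{..<n}"] by (simp add: sums_iff)
qed

lemma cos_transform_gaussian_damped_exp_exp_comb_nonneg:
  assumes u: "nonneg_exp_comb u" and \<epsilon>: "0 < \<epsilon>"
  shows "0 \<le> cos_transform (\<lambda>\<xi>::'a::euclidean_space. exp (u ((norm \<xi>)\<^sup>2)) * exp (- \<epsilon> * (norm \<xi>)\<^sup>2)) w"
proof (rule cos_transform_gaussian_damped_nonneg_limit
    [where G="\<lambda>n l. \<Sum>j<n. inverse (fact j) * u l ^ j" and B="exp (u 0)"])
  have [measurable]: "u \<in> borel_measurable borel"
    using u by (rule nonneg_exp_comb_measurable)
  show "0 \<le> cos_transform (\<lambda>\<xi>::'a. (\<Sum>j<n. inverse (fact j) * u ((norm \<xi>)\<^sup>2) ^ j)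
      * exp (- \<epsilon> * (norm \<xi>)\<^sup>2)) w" for n
    using u \<epsilon> by (intro cos_transform_gaussian_damped_exp_comb_nonneg nonneg_exp_comb_sum
        nonneg_exp_comb_cmult nonneg_exp_comb_power) auto
  show "(\<lambda>n. \<Sum>j<n. inverse (fact j) * u l ^ j) \<longlonglongrightarrow> exp (u l)" for l
    using exp_converges[of "u l"] by (simp add: sums_def divide_inverse mult.commute)
  show "\<bar>\<Sum>j<n. inverse (fact j) * u l ^ j\<bar> \<le> exp (u 0)" if "0 < l" for n l
  proof -
    have "0 \<le> u l" "u l \<le> u 0"
      using u that by (auto intro: nonneg_exp_comb_nonneg nonneg_exp_comb_antimono)
    then show ?thesis
      using sum_power_div_fact_le_exp[of "u l" n]
      by (simp add: sum_nonneg divide_inverse mult.commute order_trans[OF _ exp_mono])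
  qed
  show "(\<lambda>l. \<Sum>j<n. inverse (fact j) * u l ^ j) \<in> borel_measurable borel" for n
    by measurable
  show "(\<lambda>l. exp (u l)) \<in> borel_measurable borel"
    by measurable
qed (rule \<epsilon>)

definition one_minus_powr_coeff :: "real \<Rightarrow> nat \<Rightarrow> real" where
  "one_minus_powr_coeff \<beta> k = - (\<beta> gchoose Suc k) * (- 1) ^ Suc k"

lemma one_minus_powr_coeff_nonneg:
  assumes "0 < \<beta>" "\<beta> < 1"
  shows "0 \<le> one_minus_powr_coeff \<beta> k"
proof -
  have "one_minus_powr_coeff \<beta> k = \<beta> * pochhammer (1 - \<beta>) k / fact (Suc k)"
    by (simp add: one_minus_powr_coeff_def gbinomial_pochhammer pochhammer_rec)
  then show ?thesis
    using assms by (simp add: pochhammer_pos less_imp_le)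
qed

lemma sums_one_minus_powr:
  fixes \<beta> q :: real
  assumes "\<bar>q\<bar> < 1"
  shows "(\<lambda>k. one_minus_powr_coeff \<beta> k * q ^ Suc k) sums (1 - (1 - q) powr \<beta>)"
proof -
  have "(\<lambda>k. (\<beta> gchoose k) * (- q) ^ k) sums (1 - q) powr \<beta>"
    using gen_binomial_real[of "- q" \<beta>] assms by simp
  then have "(\<lambda>k. (\<beta> gchoose Suc k) * (- q) ^ Suc k) sums ((1 - q) powr \<beta> - 1)"
    by (subst sums_Suc_iff) simp
  from sums_minus[OF this] show ?thesis
    by (simp add: one_minus_powr_coeff_def power_minus' mult_ac)
qed

lemma one_minus_powr_partial_sum_le:
  fixes \<beta> q :: real
  assumes \<beta>: "0 < \<beta>" "\<beta> < 1" and q: "0 \<le> q" "q < 1"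
  shows "(\<Sum>k<n. one_minus_powr_coeff \<beta> k * q ^ Suc k) \<le> 1"
proof -
  have "0 \<le> one_minus_powr_coeff \<beta> k * q ^ Suc k" for k
    using one_minus_powr_coeff_nonneg[OF \<beta>] q by simp
  then have "(\<Sum>k<n. one_minus_powr_coeff \<beta> k * q ^ Suc k) \<le> 1 - (1 - q) powr \<beta>"
    using sum_le_suminf[of "\<lambda>k. one_minus_powr_coeff \<beta> k * q ^ Suc k" "{..<n}"]
      sums_one_minus_powr[of q \<beta>] q
    by (simp add: sums_iff)
  then show ?thesis
    using powr_ge_zero[of "1 - q" \<beta>] by linarith
qed

lemma cos_transform_gaussian_damped_exp_one_minus_exp_powr_nonneg:
  fixes \<beta> T h :: real
  assumes \<beta>: "0 < \<beta>" "\<beta> < 1" and T: "0 \<le> T" and h: "0 < h" and \<epsilon>: "0 < \<epsilon>"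
  shows "0 \<le> cos_transform (\<lambda>\<xi>::'a::euclidean_space.
           exp (- T * (1 - exp (- h * (norm \<xi>)\<^sup>2)) powr \<beta>) * exp (- \<epsilon> * (norm \<xi>)\<^sup>2)) w"
proof -
  define S where "S n l = (\<Sum>k<n. one_minus_powr_coeff \<beta> k * exp (- h * l) ^ Suc k)" for n l
  have S_sums: "(\<lambda>n. S n l) \<longlonglongrightarrow> 1 - (1 - exp (- h * l)) powr \<beta>" if "0 < l" for l
    unfolding S_def using sums_one_minus_powr[of "exp (- h * l)" \<beta>] h that by (simp add: sums_def)
  have S_le: "S n l \<le> 1" if "0 < l" for n l
    unfolding S_def using one_minus_powr_partial_sum_le[OF \<beta>] h that by simp
  \<comment> \<open>With \<open>q = e\<^bsup>-hl\<^esup>\<close>, the integrand is \<open>e\<^bsup>-T\<^esup> exp (T (1 - (1 - q)\<^sup>\<beta>))\<close> and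
    \<open>T (1 - (1 - q)\<^sup>\<beta>)\<close> is approximated by the nonnegative combinations \<open>T S n\<close>.\<close>
  show ?thesis
  proof (rule cos_transform_gaussian_damped_nonneg_limit
      [where G="\<lambda>n l. exp (- T) * exp (T * S n l)" and B=1])
    show "0 \<le> cos_transform (\<lambda>\<xi>::'a. exp (- T) * exp (T * S n ((norm \<xi>)\<^sup>2))
        * exp (- \<epsilon> * (norm \<xi>)\<^sup>2)) w" for n
    proof -
      have "nonneg_exp_comb (\<lambda>l. T * S n l)"
        unfolding S_def using T h one_minus_powr_coeff_nonneg[OF \<beta>]
        by (intro nonneg_exp_comb_cmult nonneg_exp_comb_sum nonneg_exp_comb_power
            nonneg_exp_comb_exp) auto
      then show ?thesis
        using \<epsilon> cos_transform_gaussian_damped_exp_exp_comb_nonneg[of "\<lambda>l. T * S n l" \<epsilon> w]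
        by (simp add: mult.assoc cos_transform_mult_left)
    qed
    show "(\<lambda>n. exp (- T) * exp (T * S n l)) \<longlonglongrightarrow> exp (- T * (1 - exp (- h * l)) powr \<beta>)"
      if "0 < l" for l
    proof -
      have "(\<lambda>n. exp (- T) * exp (T * S n l))
          \<longlonglongrightarrow> exp (- T) * exp (T * (1 - (1 - exp (- h * l)) powr \<beta>))"
        using S_sums[OF that] by (intro tendsto_intros)
      then show ?thesis
        by (simp add: algebra_simps flip: exp_add)
    qed
    show "\<bar>exp (- T) * exp (T * S n l)\<bar> \<le> 1" if "0 < l" for n l
      using S_le[OF that, of n] T by (simp add: mult_left_le flip: exp_add)
    show "(\<lambda>l. exp (- T) * exp (T * S n l)) \<in> borel_measurable borel" for n
      unfolding S_def by measurable
  qed (use \<epsilon> in simp_all)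
qed

lemma cos_transform_gaussian_damped_exp_neg_powr_nonneg:
  fixes \<beta> t :: real
  assumes \<beta>: "0 < \<beta>" "\<beta> < 1" and t: "0 \<le> t" and \<epsilon>: "0 < \<epsilon>"
  shows "0 \<le> cos_transform (\<lambda>\<xi>::'a::euclidean_space.
           exp (- t * ((norm \<xi>)\<^sup>2) powr \<beta>) * exp (- \<epsilon> * (norm \<xi>)\<^sup>2)) w"
proof (rule cos_transform_gaussian_damped_nonneg_limit
    [where G="\<lambda>n l. exp (- t * ((1 - exp (- l / Suc n)) * Suc n) powr \<beta>)" and B=1])
  show "0 \<le> cos_transform (\<lambda>\<xi>::'a. exp (- t * ((1 - exp (- (norm \<xi>)\<^sup>2 / Suc n)) * Suc n) powr \<beta>)
      * exp (- \<epsilon> * (norm \<xi>)\<^sup>2)) w" for n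
  proof -
    have "((1 - exp (- (norm \<xi>)\<^sup>2 / Suc n)) * Suc n) powr \<beta>
        = Suc n powr \<beta> * (1 - exp (- (1 / Suc n) * (norm \<xi>)\<^sup>2)) powr \<beta>" for \<xi> :: 'a
      by (simp add: powr_mult mult.commute)
    then have "(\<lambda>\<xi>::'a. exp (- t * ((1 - exp (- (norm \<xi>)\<^sup>2 / Suc n)) * Suc n) powr \<beta>)
          * exp (- \<epsilon> * (norm \<xi>)\<^sup>2))
        = (\<lambda>\<xi>. exp (- (t * Suc n powr \<beta>) * (1 - exp (- (1 / Suc n) * (norm \<xi>)\<^sup>2)) powr \<beta>)
          * exp (- \<epsilon> * (norm \<xi>)\<^sup>2))"
      by (simp only: mult.assoc mult_minus_left)
    then show ?thesis
      using \<beta> t \<epsilon> cos_transform_gaussian_damped_exp_one_minus_exp_powr_nonneg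
        [of \<beta> "t * Suc n powr \<beta>" "1 / Suc n" \<epsilon> w]
      by simp
  qed
  show "(\<lambda>n. exp (- t * ((1 - exp (- l / Suc n)) * Suc n) powr \<beta>)) \<longlonglongrightarrow> exp (- t * l powr \<beta>)"
    if "0 < l" for l
  proof -
    have "(\<lambda>n. (1 - exp (- l / Suc n)) * Suc n) \<longlonglongrightarrow> l"
      using that by real_asymp
    then show ?thesis
      using that by (intro tendsto_intros) auto
  qed
  show "\<bar>exp (- t * ((1 - exp (- l / Suc n)) * Suc n) powr \<beta>)\<bar> \<le> 1" for n l
    using t by simp
qed (use \<epsilon> in simp_all)

lemma stable_hk_nonneg:
  assumes t: "0 < t" and \<alpha>: "0 < \<alpha>" "\<alpha> < 2"
  shows "0 \<le> stable_hk \<alpha> t (w::'a::euclidean_space)"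
proof -
  have "((norm \<xi>)\<^sup>2) powr (\<alpha> / 2) = norm \<xi> powr \<alpha>" for \<xi> :: 'a
  proof -
    have sq: "(norm \<xi>)\<^sup>2 = norm \<xi> powr 2"
      by (simp add: powr_numeral)
    show ?thesis
      by (simp only: sq powr_powr) simp
  qed
  then have "0 \<le> cos_transform (\<lambda>\<xi>::'a. stable_char \<alpha> t \<xi> * exp (- (1 / Suc n) * (norm \<xi>)\<^sup>2)) w"
    for n
    using cos_transform_gaussian_damped_exp_neg_powr_nonneg[of "\<alpha> / 2" t "1 / Suc n" w] t \<alpha>
    by (simp add: stable_char_def)
  moreover have "(\<lambda>n. cos_transform (\<lambda>\<xi>::'a. stable_char \<alpha> t \<xi> * exp (- (1 / Suc n) * (norm \<xi>)\<^sup>2)) w)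
      \<longlonglongrightarrow> cos_transform (stable_char \<alpha> t) w"
    using integral_gaussian_damped_tendsto[OF integrable_mult_cos[OF integrable_stable_char[OF t \<alpha>(1)]]]
    by (simp add: cos_transform_def mult_ac)
  ultimately have "0 \<le> cos_transform (stable_char \<alpha> t) w"
    by (intro LIMSEQ_le_const) auto
  then show ?thesis
    by (simp add: stable_hk_eq_cos_transform)
qed

section \<open>The Chapman--Kolmogorov equation under Gaussian damping\<close>

text \<open>\<open>gaussian_ft \<delta> d |\<cdot>| / (2\<pi>)\<^sup>d\<close> is the Gaussian density of variance \<open>2\<delta>\<close>, so \<open>gauss_smooth \<delta> f\<close>
  is a mollification of \<open>f\<close> and tends to \<open>f\<close> as \<open>\<delta> \<longrightarrow> 0\<close>.\<close>

definition gauss_smooth :: "real \<Rightarrow> ('a::euclidean_space \<Rightarrow> real) \<Rightarrow> 'a \<Rightarrow> real" where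
  "gauss_smooth \<delta> f \<xi> = (\<integral>\<eta>. f \<eta> * gaussian_ft \<delta> DIM('a) (norm (\<eta> - \<xi>)) \<partial>lborel) / (2 * pi) ^ DIM('a)"

lemma gauss_smooth_measurable [measurable]:
  assumes [measurable]: "f \<in> borel_measurable borel"
  shows "gauss_smooth \<delta> f \<in> borel_measurable borel"
  unfolding gauss_smooth_def by measurable

lemma integrable_mult_gaussian_ft:
  assumes f: "integrable lborel f" and \<delta>: "0 < \<delta>"
  shows "integrable lborel (\<lambda>\<eta>::'a::euclidean_space. f \<eta> * gaussian_ft \<delta> DIM('a) (norm (\<eta> - \<xi>)))"
proof (rule Bochner_Integration.integrable_bound)
  have [measurable]: "f \<in> borel_measurable borel"
    using borel_measurable_integrable[OF f] by simp
  show "integrable lborel (\<lambda>\<eta>. sqrt (pi / \<delta>) ^ DIM('a) * \<bar>f \<eta>\<bar>)"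
    using f by (intro integrable_mult_right integrable_abs)
  show "(\<lambda>\<eta>. f \<eta> * gaussian_ft \<delta> DIM('a) (norm (\<eta> - \<xi>))) \<in> borel_measurable lborel"
    by measurable
  show "AE \<eta> in lborel. norm (f \<eta> * gaussian_ft \<delta> DIM('a) (norm (\<eta> - \<xi>)))
      \<le> norm (sqrt (pi / \<delta>) ^ DIM('a) * \<bar>f \<eta>\<bar>)"
    using \<delta> by (intro AE_I2)
      (simp add: abs_mult gaussian_ft_nonneg gaussian_ft_le mult.commute mult_left_mono)
qed

lemma gauss_smooth_eq:
  fixes f :: "'a::euclidean_space \<Rightarrow> real"
  assumes [measurable]: "f \<in> borel_measurable borel" and \<delta>: "0 < \<delta>"
  shows "gauss_smooth \<delta> f \<xi>
    = (\<integral>\<zeta>. f (\<xi> + (2 * sqrt \<delta>) *\<^sub>R \<zeta>) * exp (- (norm \<zeta>)\<^sup>2) \<partial>lborel) / sqrt pi ^ DIM('a)"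
proof -
  define s where "s = 2 * sqrt \<delta>"
  have s: "0 < s"
    using \<delta> by (simp add: s_def)
  have eq: "f (\<xi> + s *\<^sub>R \<zeta>) * gaussian_ft \<delta> DIM('a) (norm ((\<xi> + s *\<^sub>R \<zeta>) - \<xi>))
      = sqrt (pi / \<delta>) ^ DIM('a) * (f (\<xi> + s *\<^sub>R \<zeta>) * exp (- (norm \<zeta>)\<^sup>2))" for \<zeta> :: 'a
    using \<delta> by (simp add: gaussian_ft_def s_def power_mult_distrib)
  have "(\<integral>\<eta>. f \<eta> * gaussian_ft \<delta> DIM('a) (norm (\<eta> - \<xi>)) \<partial>lborel)
      = \<bar>s\<bar> ^ DIM('a) * (\<integral>\<zeta>. f (\<xi> + s *\<^sub>R \<zeta>) * gaussian_ft \<delta> DIM('a) (norm ((\<xi> + s *\<^sub>R \<zeta>) - \<xi>)) \<partial>lborel)"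
    by (rule lborel_integral_affine) (use s in auto)
  also have "\<dots> = s ^ DIM('a) * sqrt (pi / \<delta>) ^ DIM('a)
      * (\<integral>\<zeta>. f (\<xi> + s *\<^sub>R \<zeta>) * exp (- (norm \<zeta>)\<^sup>2) \<partial>lborel)"
    using s by (simp only: eq integral_mult_right_zero)
  finally have I: "(\<integral>\<eta>. f \<eta> * gaussian_ft \<delta> DIM('a) (norm (\<eta> - \<xi>)) \<partial>lborel)
      = s ^ DIM('a) * sqrt (pi / \<delta>) ^ DIM('a) * (\<integral>\<zeta>. f (\<xi> + s *\<^sub>R \<zeta>) * exp (- (norm \<zeta>)\<^sup>2) \<partial>lborel)" .
  have s_sqrt: "s * sqrt (pi / \<delta>) = 2 * sqrt pi"
    using \<delta> by (simp add: s_def real_sqrt_divide)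
  have sqrt_pi: "2 * sqrt pi / (2 * pi) = 1 / sqrt pi"
    by (simp add: divide_simps)
  have "s ^ DIM('a) * sqrt (pi / \<delta>) ^ DIM('a) / (2 * pi) ^ DIM('a) = (s * sqrt (pi / \<delta>) / (2 * pi)) ^ DIM('a)"
    by (simp add: power_mult_distrib power_divide)
  also have "\<dots> = 1 / sqrt pi ^ DIM('a)"
    by (simp only: s_sqrt sqrt_pi power_one_over)
  finally have factor: "s ^ DIM('a) * sqrt (pi / \<delta>) ^ DIM('a) / (2 * pi) ^ DIM('a) = 1 / sqrt pi ^ DIM('a)" .
  have "gauss_smooth \<delta> f \<xi> = s ^ DIM('a) * sqrt (pi / \<delta>) ^ DIM('a) / (2 * pi) ^ DIM('a)
      * (\<integral>\<zeta>. f (\<xi> + s *\<^sub>R \<zeta>) * exp (- (norm \<zeta>)\<^sup>2) \<partial>lborel)"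
    unfolding gauss_smooth_def I by simp
  also have "\<dots> = (\<integral>\<zeta>. f (\<xi> + s *\<^sub>R \<zeta>) * exp (- (norm \<zeta>)\<^sup>2) \<partial>lborel) / sqrt pi ^ DIM('a)"
    by (simp only: factor) simp
  finally show ?thesis
    unfolding s_def .
qed

lemma abs_gauss_smooth_le:
  fixes f :: "'a::euclidean_space \<Rightarrow> real"
  assumes [measurable]: "f \<in> borel_measurable borel" and bound: "\<And>\<eta>. \<bar>f \<eta>\<bar> \<le> B" and \<delta>: "0 < \<delta>"
  shows "\<bar>gauss_smooth \<delta> f \<xi>\<bar> \<le> B"
proof -
  have gauss: "has_bochner_integral lborel (\<lambda>\<zeta>::'a. exp (- (norm \<zeta>)\<^sup>2)) (sqrt pi ^ DIM('a))"
    using has_bochner_integral_gaussian[of 1] by simp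
  have "\<bar>\<integral>\<zeta>. f (\<xi> + (2 * sqrt \<delta>) *\<^sub>R \<zeta>) * exp (- (norm \<zeta>)\<^sup>2) \<partial>lborel\<bar>
      \<le> (\<integral>\<zeta>. \<bar>f (\<xi> + (2 * sqrt \<delta>) *\<^sub>R \<zeta>) * exp (- (norm \<zeta>)\<^sup>2)\<bar> \<partial>lborel)"
    by (rule integral_abs_bound)
  also have "\<dots> \<le> (\<integral>\<zeta>. B * exp (- (norm (\<zeta>::'a))\<^sup>2) \<partial>lborel)"
    using integrable.intros[OF gauss] bound order.trans[OF abs_ge_zero bound]
    by (intro integral_mono' integrable_mult_right) (auto simp: abs_mult mult_right_mono)
  also have "\<dots> = B * sqrt pi ^ DIM('a)"
    using gauss by (simp add: has_bochner_integral_iff)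
  finally show ?thesis
    using \<delta> by (simp add: gauss_smooth_eq divide_le_eq)
qed

lemma gauss_smooth_tendsto:
  fixes f :: "'a::euclidean_space \<Rightarrow> real"
  assumes [measurable]: "f \<in> borel_measurable borel" and bound: "\<And>\<eta>. \<bar>f \<eta>\<bar> \<le> B"
    and cont: "isCont f \<xi>"
  shows "(\<lambda>n. gauss_smooth (1 / Suc n) f \<xi>) \<longlonglongrightarrow> f \<xi>"
proof -
  define s where "s n = 2 * sqrt (1 / real (Suc n))" for n
  have s: "s \<longlonglongrightarrow> 0"
    unfolding s_def by (rule tendsto_mult_right_zero) (real_asymp)
  have lim: "(\<lambda>n. \<integral>\<zeta>. f (\<xi> + s n *\<^sub>R \<zeta>) * exp (- (norm \<zeta>)\<^sup>2) \<partial>lborel)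
      \<longlonglongrightarrow> (\<integral>\<zeta>. f \<xi> * exp (- (norm (\<zeta>::'a))\<^sup>2) \<partial>lborel)"
  proof (rule integral_dominated_convergence[where w="\<lambda>\<zeta>. B * exp (- (norm \<zeta>)\<^sup>2)"])
    show "integrable lborel (\<lambda>\<zeta>::'a. B * exp (- (norm \<zeta>)\<^sup>2))"
      using integrable_gaussian[of 1, where 'a='a] by simp
    show "AE \<zeta> in lborel. (\<lambda>n. f (\<xi> + s n *\<^sub>R \<zeta>) * exp (- (norm \<zeta>)\<^sup>2))
        \<longlonglongrightarrow> f \<xi> * exp (- (norm (\<zeta>::'a))\<^sup>2)"
    proof (rule AE_I2)
      fix \<zeta> :: 'a
      have "(\<lambda>n. \<xi> + s n *\<^sub>R \<zeta>) \<longlonglongrightarrow> \<xi> + 0 *\<^sub>R \<zeta>"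
        by (intro tendsto_intros s)
      then show "(\<lambda>n. f (\<xi> + s n *\<^sub>R \<zeta>) * exp (- (norm \<zeta>)\<^sup>2)) \<longlonglongrightarrow> f \<xi> * exp (- (norm \<zeta>)\<^sup>2)"
        by (intro tendsto_intros isCont_tendsto_compose[OF cont]) simp
    qed
    show "AE \<zeta> in lborel. norm (f (\<xi> + s n *\<^sub>R \<zeta>) * exp (- (norm \<zeta>)\<^sup>2))
        \<le> B * exp (- (norm (\<zeta>::'a))\<^sup>2)" for n
      using bound by (intro AE_I2) (simp add: abs_mult mult_right_mono)
  qed measurable
  have mass: "(\<integral>\<zeta>. f \<xi> * exp (- (norm (\<zeta>::'a))\<^sup>2) \<partial>lborel) = f \<xi> * sqrt pi ^ DIM('a)"
    using has_bochner_integral_gaussian[of 1, where 'a='a] by (simp add: has_bochner_integral_iff)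
  have "(\<lambda>n. (\<integral>\<zeta>. f (\<xi> + s n *\<^sub>R \<zeta>) * exp (- (norm \<zeta>)\<^sup>2) \<partial>lborel) / sqrt pi ^ DIM('a))
      \<longlonglongrightarrow> f \<xi> * sqrt pi ^ DIM('a) / sqrt pi ^ DIM('a)"
    using lim unfolding mass by (intro tendsto_divide tendsto_const) simp_all
  then show ?thesis
    by (simp add: gauss_smooth_eq s_def)
qed

lemma integral_gauss_smooth_symmetrized:
  fixes f :: "'a::euclidean_space \<Rightarrow> real"
  assumes f: "integrable lborel f" and \<delta>: "0 < \<delta>"
  shows "(\<integral>\<eta>. f \<eta> * (gaussian_ft \<delta> DIM('a) (norm (\<eta> - \<xi>)) + gaussian_ft \<delta> DIM('a) (norm (\<eta> + \<xi>)))
           \<partial>lborel)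
    = (2 * pi) ^ DIM('a) * (gauss_smooth \<delta> f \<xi> + gauss_smooth \<delta> f (- \<xi>))"
  using Bochner_Integration.integral_add[OF integrable_mult_gaussian_ft[OF f \<delta>, of \<xi>]
      integrable_mult_gaussian_ft[OF f \<delta>, of "- \<xi>"]]
  by (simp add: gauss_smooth_def distrib_left)

lemma integral_product_cos_transform:
  fixes f :: "'a::euclidean_space \<Rightarrow> real"
  assumes f: "integrable lborel f"
  shows "(\<integral>p. f (fst p) * f (snd p) * (cos (fst p \<bullet> w) * cos (snd p \<bullet> w') * c) \<partial>(lborel \<Otimes>\<^sub>M lborel))
    = cos_transform f w * cos_transform f w' * c"
proof -
  have "(\<lambda>p. f (fst p) * f (snd p) * (cos (fst p \<bullet> w) * cos (snd p \<bullet> w') * c))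
      = (\<lambda>(x, y). (f x * cos (x \<bullet> w)) * (f y * cos (y \<bullet> w') * c))"
    by (auto simp: fun_eq_iff mult_ac)
  then show ?thesis
    using lborel_pair.integral_product_mult[OF integrable_mult_cos[OF f]
        integrable_mult_left[OF integrable_mult_cos[OF f]]]
    by (simp add: cos_transform_def)
qed

lemma integrable_cos_cos_gaussian_kernel:
  fixes f :: "'a::euclidean_space \<Rightarrow> real" and v :: 'a
  assumes f: "integrable lborel f" and \<delta>: "0 < \<delta>"
  shows "integrable (lborel \<Otimes>\<^sub>M (lborel \<Otimes>\<^sub>M lborel)) (\<lambda>(u::'a, p). f (fst p) * f (snd p) *
           (cos (fst p \<bullet> (v - u)) * cos (snd p \<bullet> u) * exp (- \<delta> * (norm u)\<^sup>2)))"
proof (rule Bochner_Integration.integrable_bound)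
  interpret Q: pair_sigma_finite "lborel::'a measure" "lborel \<Otimes>\<^sub>M lborel :: ('a \<times> 'a) measure"
    by (simp add: pair_sigma_finite_def lborel.sigma_finite_measure_axioms lborel_prod)
  have [measurable]: "f \<in> borel_measurable borel"
    using borel_measurable_integrable[OF f] by simp
  have ff: "integrable (lborel \<Otimes>\<^sub>M lborel) (\<lambda>(x, y). \<bar>f x\<bar> * \<bar>f y\<bar>)"
    using f by (intro lborel_pair.integrable_product_mult integrable_abs)
  show "integrable (lborel \<Otimes>\<^sub>M (lborel \<Otimes>\<^sub>M lborel))
      (\<lambda>(u::'a, p). exp (- \<delta> * (norm u)\<^sup>2) * (case p of (x, y) \<Rightarrow> \<bar>f x\<bar> * \<bar>f y\<bar>))"
    by (rule Q.integrable_product_mult[OF integrable_gaussian[OF \<delta>] ff])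
  show "(\<lambda>(u::'a, p). f (fst p) * f (snd p) * (cos (fst p \<bullet> (v - u)) * cos (snd p \<bullet> u)
      * exp (- \<delta> * (norm u)\<^sup>2))) \<in> borel_measurable (lborel \<Otimes>\<^sub>M (lborel \<Otimes>\<^sub>M lborel))"
    by measurable
  have "\<bar>cos (fst p \<bullet> (v - u)) * cos (snd p \<bullet> u)\<bar> * (exp (- \<delta> * (norm u)\<^sup>2) * \<bar>f (fst p) * f (snd p)\<bar>)
      \<le> exp (- \<delta> * (norm u)\<^sup>2) * \<bar>f (fst p) * f (snd p)\<bar>" for u :: 'a and p :: "'a \<times> 'a"
    by (intro mult_left_le_one_le) (auto simp: abs_mult intro: mult_le_one)
  then show "AE x in lborel \<Otimes>\<^sub>M (lborel \<Otimes>\<^sub>M lborel).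
      norm (case x of (u, p) \<Rightarrow> f (fst p) * f (snd p) * (cos (fst p \<bullet> (v - u)) * cos (snd p \<bullet> u)
        * exp (- \<delta> * (norm u)\<^sup>2)))
      \<le> norm (case x of (u::'a, p) \<Rightarrow> exp (- \<delta> * (norm u)\<^sup>2) * (case p of (x, y) \<Rightarrow> \<bar>f x\<bar> * \<bar>f y\<bar>))"
    by (intro AE_I2) (simp add: split_beta abs_mult mult_ac)
qed

lemma cos_transform_product_gaussian_damped:
  fixes f :: "'a::euclidean_space \<Rightarrow> real" and v :: 'a
  assumes f: "integrable lborel f" and \<delta>: "0 < \<delta>"
  shows "(\<integral>u. cos_transform f (v - u) * cos_transform f u * exp (- \<delta> * (norm u)\<^sup>2) \<partial>lborel)
    = (2 * pi) ^ DIM('a) *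
      (\<integral>\<xi>. f \<xi> * cos (\<xi> \<bullet> v) * ((gauss_smooth \<delta> f \<xi> + gauss_smooth \<delta> f (- \<xi>)) / 2) \<partial>lborel)"
proof -
  interpret Q: pair_sigma_finite "lborel::'a measure" "lborel \<Otimes>\<^sub>M lborel :: ('a \<times> 'a) measure"
    by (simp add: pair_sigma_finite_def lborel.sigma_finite_measure_axioms lborel_prod)
  define \<gamma> where "\<gamma> = gaussian_ft \<delta> DIM('a)"
  define F where "F u p = f (fst p) * f (snd p) *
    (cos (fst p \<bullet> (v - u)) * cos (snd p \<bullet> u) * exp (- \<delta> * (norm u)\<^sup>2))" for u :: 'a and p :: "'a \<times> 'a"
  define G where "G \<xi> \<eta> = f \<xi> * cos (\<xi> \<bullet> v) / 2 * (f \<eta> * (\<gamma> (norm (\<eta> - \<xi>)) + \<gamma> (norm (\<eta> + \<xi>))))"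
    for \<xi> \<eta> :: 'a
  have F_integrable: "integrable (lborel \<Otimes>\<^sub>M (lborel \<Otimes>\<^sub>M lborel)) (\<lambda>(u, p). F u p)"
    unfolding F_def using integrable_cos_cos_gaussian_kernel[OF f \<delta>] .
  have F_inner: "(\<integral>p. F u p \<partial>(lborel \<Otimes>\<^sub>M lborel))
      = cos_transform f (v - u) * cos_transform f u * exp (- \<delta> * (norm u)\<^sup>2)" for u
    unfolding F_def by (rule integral_product_cos_transform[OF f])
  have F_outer: "(\<integral>u. F u p \<partial>lborel) = G (fst p) (snd p)" for p
  proof -
    have "has_bochner_integral lborel (\<lambda>u. F u p) (f (fst p) * f (snd p) * (cos (fst p \<bullet> v)
        * (\<gamma> (norm (snd p - fst p)) + \<gamma> (norm (snd p + fst p))) / 2))"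
      unfolding F_def \<gamma>_def
      by (intro has_bochner_integral_mult_right has_bochner_integral_cos_cos_gaussian \<delta>)
    then show ?thesis
      by (simp add: has_bochner_integral_integral_eq G_def mult_ac)
  qed
  have G_integrable: "integrable (lborel \<Otimes>\<^sub>M lborel) (\<lambda>(\<xi>, \<eta>). G \<xi> \<eta>)"
    using Q.integrable_snd[OF F_integrable] by (simp add: F_outer case_prod_beta')
  have "(\<integral>u. cos_transform f (v - u) * cos_transform f u * exp (- \<delta> * (norm u)\<^sup>2) \<partial>lborel)
      = (\<integral>u. (\<integral>p. F u p \<partial>(lborel \<Otimes>\<^sub>M lborel)) \<partial>lborel)"
    by (simp add: F_inner)
  also have "\<dots> = (\<integral>p. (\<integral>u. F u p \<partial>lborel) \<partial>(lborel \<Otimes>\<^sub>M lborel))"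
    using Q.Fubini_integral[of F] F_integrable by simp
  also have "\<dots> = (\<integral>\<xi>. (\<integral>\<eta>. G \<xi> \<eta> \<partial>lborel) \<partial>lborel)"
    using lborel_pair.integral_fst[OF G_integrable] by (simp add: F_outer case_prod_beta')
  also have "\<dots> = (\<integral>\<xi>. (2 * pi) ^ DIM('a) *
      (f \<xi> * cos (\<xi> \<bullet> v) * ((gauss_smooth \<delta> f \<xi> + gauss_smooth \<delta> f (- \<xi>)) / 2)) \<partial>lborel)"
    by (intro Bochner_Integration.integral_cong refl,
        simp only: G_def \<gamma>_def integral_mult_right_zero integral_gauss_smooth_symmetrized[OF f \<delta>])
      (simp add: algebra_simps)
  finally show ?thesis
    by simp
qed

lemma integral_gauss_smooth_symmetrized_tendsto:
  fixes f :: "'a::euclidean_space \<Rightarrow> real" and v :: 'a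
  assumes f: "integrable lborel f" and cont: "continuous_on UNIV f" and bound: "\<And>\<xi>. \<bar>f \<xi>\<bar> \<le> B"
  defines "S n \<xi> \<equiv> (gauss_smooth (1 / Suc n) f \<xi> + gauss_smooth (1 / Suc n) f (- \<xi>)) / 2"
  shows "(\<lambda>n. \<integral>\<xi>. f \<xi> * cos (\<xi> \<bullet> v) * S n \<xi> \<partial>lborel)
           \<longlonglongrightarrow> (\<integral>\<xi>. f \<xi> * cos (\<xi> \<bullet> v) * ((f \<xi> + f (- \<xi>)) / 2) \<partial>lborel)"
proof (rule integral_dominated_convergence[where w="\<lambda>\<xi>. B * \<bar>f \<xi>\<bar>"])
  have [measurable]: "f \<in> borel_measurable borel"
    using borel_measurable_integrable[OF f] by simp
  have B: "0 \<le> B"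
    using bound[of 0] by linarith
  show "integrable lborel (\<lambda>\<xi>. B * \<bar>f \<xi>\<bar>)"
    using f by (intro integrable_mult_right integrable_abs)
  show "AE \<xi> in lborel. (\<lambda>n. f \<xi> * cos (\<xi> \<bullet> v) * S n \<xi>)
      \<longlonglongrightarrow> f \<xi> * cos (\<xi> \<bullet> v) * ((f \<xi> + f (- \<xi>)) / 2)"
    using cont bound unfolding S_def
    by (intro AE_I2 tendsto_intros gauss_smooth_tendsto)
      (auto simp: continuous_on_eq_continuous_at)
  show "AE \<xi> in lborel. norm (f \<xi> * cos (\<xi> \<bullet> v) * S n \<xi>) \<le> B * \<bar>f \<xi>\<bar>" for n
  proof (rule AE_I2)
    fix \<xi> :: 'a
    have "\<bar>S n \<xi>\<bar> \<le> B"
      unfolding S_def using bound abs_gauss_smooth_le[of f B "1 / Suc n" \<xi>]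
        abs_gauss_smooth_le[of f B "1 / Suc n" "- \<xi>"]
      by simp
    then have "\<bar>cos (\<xi> \<bullet> v)\<bar> * \<bar>S n \<xi>\<bar> \<le> 1 * B"
      using B by (intro mult_mono) auto
    then show "norm (f \<xi> * cos (\<xi> \<bullet> v) * S n \<xi>) \<le> B * \<bar>f \<xi>\<bar>"
      by (simp add: abs_mult mult.assoc mult.commute[of B] mult_left_mono)
  qed
  show "(\<lambda>\<xi>. f \<xi> * cos (\<xi> \<bullet> v) * S n \<xi>) \<in> borel_measurable lborel" for n
    unfolding S_def by measurable
  show "(\<lambda>\<xi>. f \<xi> * cos (\<xi> \<bullet> v) * ((f \<xi> + f (- \<xi>)) / 2)) \<in> borel_measurable lborel"
    by measurable
qed

lemma cos_transform_product_gaussian_damped_tendsto: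
  fixes f :: "'a::euclidean_space \<Rightarrow> real" and v :: 'a
  assumes f: "integrable lborel f" and cont: "continuous_on UNIV f"
    and bound: "\<And>\<xi>. \<bar>f \<xi>\<bar> \<le> B" and even: "\<And>\<xi>. f (- \<xi>) = f \<xi>"
  shows "(\<lambda>n. \<integral>u. cos_transform f (v - u) * cos_transform f u * exp (- (1 / Suc n) * (norm u)\<^sup>2) \<partial>lborel)
           \<longlonglongrightarrow> (2 * pi) ^ DIM('a) * cos_transform (\<lambda>\<xi>. f \<xi> * f \<xi>) v"
proof -
  let ?S = "\<lambda>n \<xi>. (gauss_smooth (1 / Suc n) f \<xi> + gauss_smooth (1 / Suc n) f (- \<xi>)) / 2"
  have limit_eq: "(\<integral>\<xi>. f \<xi> * cos (\<xi> \<bullet> v) * ((f \<xi> + f (- \<xi>)) / 2) \<partial>lborel)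
      = cos_transform (\<lambda>\<xi>. f \<xi> * f \<xi>) v"
    unfolding cos_transform_def by (simp add: even mult_ac)
  have "(\<lambda>n. (2 * pi) ^ DIM('a) * (\<integral>\<xi>. f \<xi> * cos (\<xi> \<bullet> v) * ?S n \<xi> \<partial>lborel))
      \<longlonglongrightarrow> (2 * pi) ^ DIM('a) * cos_transform (\<lambda>\<xi>. f \<xi> * f \<xi>) v"
    using tendsto_mult_left[OF integral_gauss_smooth_symmetrized_tendsto[OF f cont bound],
        of "(2 * pi) ^ DIM('a)" v]
    unfolding limit_eq .
  moreover have "(\<integral>u. cos_transform f (v - u) * cos_transform f u * exp (- (1 / Suc n) * (norm u)\<^sup>2) \<partial>lborel)
      = (2 * pi) ^ DIM('a) * (\<integral>\<xi>. f \<xi> * cos (\<xi> \<bullet> v) * ?S n \<xi> \<partial>lborel)" for n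
    by (rule cos_transform_product_gaussian_damped[OF f]) simp
  ultimately show ?thesis
    by (simp only:)
qed

lemma stable_hk_product_gaussian_damped_tendsto:
  fixes v :: "'a::euclidean_space"
  assumes t: "0 < t" and \<alpha>: "0 < \<alpha>"
  shows "(\<lambda>n. \<integral>u. stable_hk \<alpha> t (v - u) * stable_hk \<alpha> t u * exp (- (1 / Suc n) * (norm u)\<^sup>2) \<partial>lborel)
           \<longlonglongrightarrow> stable_hk \<alpha> (2 * t) v"
proof -
  define C :: real where "C = (2 * pi) ^ DIM('a)"
  have C: "0 < C"
    by (simp add: C_def)
  have "(\<lambda>n. (\<integral>u. cos_transform (stable_char \<alpha> t) (v - u) * cos_transform (stable_char \<alpha> t) u
        * exp (- (1 / Suc n) * (norm u)\<^sup>2) \<partial>lborel) / (C * C))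
      \<longlonglongrightarrow> C * cos_transform (\<lambda>\<xi>. stable_char \<alpha> t \<xi> * stable_char \<alpha> t \<xi>) v / (C * C)"
    unfolding C_def
    by (intro tendsto_divide tendsto_const cos_transform_product_gaussian_damped_tendsto[where B=1]
        integrable_stable_char continuous_on_stable_char t \<alpha>)
      (use t in \<open>auto simp: stable_char_minus abs_le_iff stable_char_le_1 less_imp_le[OF stable_char_pos]\<close>)
  moreover have "(\<integral>u. stable_hk \<alpha> t (v - u) * stable_hk \<alpha> t u * exp (- (1 / Suc n) * (norm u)\<^sup>2) \<partial>lborel)
      = (\<integral>u. cos_transform (stable_char \<alpha> t) (v - u) * cos_transform (stable_char \<alpha> t) u
          * exp (- (1 / Suc n) * (norm u)\<^sup>2) \<partial>lborel) / (C * C)" for n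
    by (simp add: stable_hk_eq_cos_transform C_def)
  moreover have "C * cos_transform (\<lambda>\<xi>. stable_char \<alpha> t \<xi> * stable_char \<alpha> t \<xi>) v / (C * C)
      = stable_hk \<alpha> (2 * t) v"
    using C by (simp add: stable_hk_eq_cos_transform stable_char_mult_self C_def)
  ultimately show ?thesis
    by (simp only:)
qed

section \<open>Symmetrization\<close>

lemma set_integral_le_gaussian_damped_limit:
  fixes g :: "'a::euclidean_space \<Rightarrow> real"
  assumes [measurable]: "g \<in> borel_measurable borel"
    and nonneg: "\<And>u. 0 \<le> g u" and bound: "\<And>u. g u \<le> B"
    and lim: "(\<lambda>n. \<integral>u. g u * exp (- (1 / Suc n) * (norm u)\<^sup>2) \<partial>lborel) \<longlonglongrightarrow> L"
    and A: "A \<in> sets lborel" "emeasure lborel A < \<infinity>"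
  shows "(LINT u:A|lborel. g u) \<le> L"
proof -
  let ?e = "\<lambda>n u::'a. exp (- (1 / Suc n) * (norm u)\<^sup>2)"
  have [measurable]: "A \<in> sets borel"
    using A by simp
  have gA: "integrable lborel (\<lambda>u. indicator A u * g u)"
    using set_integrable_bounded[of g A B] nonneg bound A by (simp add: set_integrable_def)
  have ge: "integrable lborel (\<lambda>u. g u * ?e n u)" for n
  proof (rule Bochner_Integration.integrable_bound)
    show "integrable lborel (\<lambda>u. B * ?e n u)"
      by (intro integrable_mult_right integrable_gaussian) simp
    show "AE u in lborel. norm (g u * ?e n u) \<le> norm (B * ?e n u)"
      using nonneg bound order.trans[OF nonneg bound] by (intro AE_I2) (simp add: mult_right_mono)
  qed measurable
  have gAe: "integrable lborel (\<lambda>u. indicator A u * g u * ?e n u)" for n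
  proof (rule Bochner_Integration.integrable_bound[OF gA])
    show "AE u in lborel. norm (indicator A u * g u * ?e n u) \<le> norm (indicator A u * g u)"
      by (intro AE_I2) (simp add: abs_mult mult_left_le)
  qed measurable
  have "(\<integral>u. indicator A u * g u * ?e n u \<partial>lborel) \<le> (\<integral>u. g u * ?e n u \<partial>lborel)" for n
    using nonneg by (intro integral_mono gAe ge) (simp add: indicator_def)
  then have "(\<integral>u. indicator A u * g u \<partial>lborel) \<le> L"
    by (intro LIMSEQ_le[OF integral_gaussian_damped_tendsto[OF gA] lim]) auto
  then show ?thesis
    by (simp add: set_lebesgue_integral_def)
qed

lemma stable_hk_ball_integral_le:
  fixes v :: "'a::euclidean_space"
  assumes t: "0 < t" and \<alpha>: "0 < \<alpha>" "\<alpha> < 2"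
  shows "2 * (LINT u:ball 0 (norm v / 2)|lborel. stable_hk \<alpha> t (v - u) * stable_hk \<alpha> t u)
           \<le> stable_hk \<alpha> (2 * t) v"
proof -
  define r where "r = norm v / 2"
  define g where "g = (\<lambda>u. stable_hk \<alpha> t (v - u) * stable_hk \<alpha> t u)"
  define M where "M = (\<integral>\<xi>. stable_char \<alpha> t (\<xi>::'a) \<partial>lborel) / (2 * pi) ^ DIM('a)"
  have p: "0 \<le> stable_hk \<alpha> t w" "stable_hk \<alpha> t w \<le> M" for w :: 'a
    using stable_hk_nonneg[OF t \<alpha>] stable_hk_le[OF t \<alpha>(1)] by (auto simp: M_def)
  have g [measurable]: "g \<in> borel_measurable borel"
    unfolding g_def by measurable
  have g_bounds: "0 \<le> g u" "g u \<le> M * M" for u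
    unfolding g_def using p by (auto intro: mult_mono order.trans)
  have set_integrable: "set_integrable lborel (ball c r) g" for c
    using g_bounds emeasure_lborel_ball_finite
    by (intro set_integrable_bounded[where B="M * M"]) auto
  have disjoint: "ball 0 r \<inter> ball v r = {}"
  proof -
    have "\<not> (norm u < r \<and> norm (v - u) < r)" for u :: 'a
      using norm_triangle_ineq[of u "v - u"] by (simp add: r_def)
    then show ?thesis
      by (auto simp: dist_norm)
  qed
  have reflection: "(LINT u:ball v r|lborel. g u) = (LINT u:ball 0 r|lborel. g u)"
    using set_integral_ball_reflect[OF g, of v r] by (simp add: g_def mult.commute)
  have "(LINT u:ball 0 r \<union> ball v r|lborel. g u) \<le> stable_hk \<alpha> (2 * t) v"
    using g_bounds stable_hk_product_gaussian_damped_tendsto[OF t \<alpha>(1), of v]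
    by (intro set_integral_le_gaussian_damped_limit emeasure_bounded_finite) (auto simp: g_def)
  then show ?thesis
    unfolding set_integral_Un[OF disjoint set_integrable set_integrable] reflection
    by (simp add: r_def g_def)
qed

theorem lemma3p3:
  fixes \<alpha> t :: real and x y :: "'a::euclidean_space"
  assumes "0 < \<alpha>" and "\<alpha> < real DIM('a)" and "\<alpha> < 2"
    and "0 < t"
  shows "(LINT z : ball y (dist x y / 2) | lborel.
            stable_hk2 \<alpha> t x z * stable_hk2 \<alpha> t z y)
         \<le> stable_hk2 \<alpha> (2 * t) x y / 2"
proof -
  have "(LINT z : ball y (dist x y / 2) | lborel. stable_hk2 \<alpha> t x z * stable_hk2 \<alpha> t z y)
      = (LINT u : ball 0 (norm (x - y) / 2) | lborel. stable_hk \<alpha> t ((x - y) - u) * stable_hk \<alpha> t u)"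
    using set_integral_ball_translate[of "\<lambda>z. stable_hk \<alpha> t (x - z) * stable_hk \<alpha> t (z - y)" y]
    by (simp add: stable_hk2_def dist_norm algebra_simps)
  then show ?thesis
    using stable_hk_ball_integral_le[of t \<alpha> "x - y"] assms by (simp add: stable_hk2_def)
qed

end
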